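(* Let $X$ be a shift space which is eventually dendric with threshold $n$, let $U\subseteq\mathcal L(X)$ be a finite bifix code which is two-sided $X$-complete, and let $Y$ be the complete bifix decoding of $X$ with respect to $U$. Then $Y$ is eventually dendric with threshold $n$.
   Context: $A$ is a finite alphabet; a shift space is a closed shift-invariant subset $X\subseteq A^{\mathbb Z}$; $\mathcal L(X)$ is its set of finite factors. For a shift space $Z$ over an alphabet $C$ and $w\in\mathcal L(Z)$, $\mathcal E_1(w)$ is the undirected bipartite graph with vertex set the disjoint union of $\{a\in C: aw\in\mathcal L(Z)\}$ and $\{b\in C: wb\in\mathcal L(Z)\}$ and an edge $(a,b)$ iff $awb\in\mathcal L(Z)$; $Z$ is eventually dendric with threshold $n$ if $\mathcal E_1(w)$ is a tree for every $w\in\mathcal L(Z)$ of length $\ge n$. A bifix code is a set of words none of which is a proper prefix or a proper suffix of another. A set $U\subseteq\mathcal L(X)$ is right (resp. left) $X$-complete if every long enough word of $\mathcal L(X)$ has a prefix (resp. suffix) in $U$, and two-sided $X$-complete if it is both. Given such a finite bifix code $U$, a coding morphism is a bijection $\varphi:B\to U$ from an alphabet $B$, extended to a morphism $B^*\to A^*$; the set $\varphi^{-1}(\mathcal L(X))$ is the language of a shift space $Y\subseteq B^{\mathbb Z}$, called the complete bifix decoding of $X$ with respect to $U$. *)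

theory Defs
  imports Main "HOL-Library.Sublist"
begin

definition factor :: "(int \<Rightarrow> 'a) \<Rightarrow> int \<Rightarrow> nat \<Rightarrow> 'a list" where
  "factor x i n = map (\<lambda>k. x (i + int k)) [0..<n]"

definition lang :: "(int \<Rightarrow> 'a) set \<Rightarrow> 'a list set" where
  "lang X = {w. \<exists>x\<in>X. \<exists>i. w = factor x i (length w)}"

text \<open>Shift space over alphabet A: a subset of A^Z, invariant under the shift (sigma X = X),
  and closed in the product topology (A discrete); closedness is written out as:
  every point all of whose finite factors are factors of X lies in X.\<close>
definition shift_space :: "'a set \<Rightarrow> (int \<Rightarrow> 'a) set \<Rightarrow> bool" where
  "shift_space A X \<longleftrightarrow> finite A
     \<and> (\<forall>x\<in>X. \<forall>i. x i \<in> A)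
     \<and> (\<lambda>x. \<lambda>i. x (i + 1)) ` X = X
     \<and> (\<forall>x. (\<forall>i. x i \<in> A) \<longrightarrow> (\<forall>i n. factor x i n \<in> lang X) \<longrightarrow> x \<in> X)"

definition ug_connected :: "'v set \<Rightarrow> ('v \<Rightarrow> 'v \<Rightarrow> bool) \<Rightarrow> bool" where
  "ug_connected V E \<longleftrightarrow> (\<forall>u\<in>V. \<forall>v\<in>V. \<exists>p. p \<noteq> [] \<and> hd p = u \<and> last p = v \<and> set p \<subseteq> V
      \<and> (\<forall>i. i + 1 < length p \<longrightarrow> E (p ! i) (p ! (i + 1))))"

definition ug_acyclic :: "'v set \<Rightarrow> ('v \<Rightarrow> 'v \<Rightarrow> bool) \<Rightarrow> bool" where
  "ug_acyclic V E \<longleftrightarrow> \<not> (\<exists>p. length p \<ge> 3 \<and> distinct p \<and> set p \<subseteq> V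
      \<and> (\<forall>i. i + 1 < length p \<longrightarrow> E (p ! i) (p ! (i + 1))) \<and> E (last p) (hd p))"

definition ug_tree :: "'v set \<Rightarrow> ('v \<Rightarrow> 'v \<Rightarrow> bool) \<Rightarrow> bool" where
  "ug_tree V E \<longleftrightarrow> V \<noteq> {} \<and> ug_connected V E \<and> ug_acyclic V E"

text \<open>Extension graph E_1(w) of a word w in the language L: bipartite, left copy Inl, right copy Inr.\<close>
definition ext_vertices :: "'a list set \<Rightarrow> 'a list \<Rightarrow> ('a + 'a) set" where
  "ext_vertices L w = Inl ` {a. a # w \<in> L} \<union> Inr ` {b. w @ [b] \<in> L}"

fun ext_adj :: "'a list set \<Rightarrow> 'a list \<Rightarrow> ('a + 'a) \<Rightarrow> ('a + 'a) \<Rightarrow> bool" where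
  "ext_adj L w (Inl a) (Inr b) = (a # w @ [b] \<in> L)"
| "ext_adj L w (Inr b) (Inl a) = (a # w @ [b] \<in> L)"
| "ext_adj L w _ _ = False"

definition eventually_dendric :: "(int \<Rightarrow> 'a) set \<Rightarrow> nat \<Rightarrow> bool" where
  "eventually_dendric Z n \<longleftrightarrow>
     (\<forall>w\<in>lang Z. length w \<ge> n \<longrightarrow> ug_tree (ext_vertices (lang Z) w) (ext_adj (lang Z) w))"

definition bifix_code :: "'a list set \<Rightarrow> bool" where
  "bifix_code U \<longleftrightarrow> (\<forall>u\<in>U. \<forall>v\<in>U. \<not> strict_prefix u v \<and> \<not> strict_suffix u v)"

definition right_complete :: "(int \<Rightarrow> 'a) set \<Rightarrow> 'a list set \<Rightarrow> bool" where
  "right_complete X U \<longleftrightarrow> (\<exists>N. \<forall>w\<in>lang X. length w \<ge> N \<longrightarrow> (\<exists>u\<in>U. prefix u w))"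

definition left_complete :: "(int \<Rightarrow> 'a) set \<Rightarrow> 'a list set \<Rightarrow> bool" where
  "left_complete X U \<longleftrightarrow> (\<exists>N. \<forall>w\<in>lang X. length w \<ge> N \<longrightarrow> (\<exists>u\<in>U. suffix u w))"

definition two_sided_complete :: "(int \<Rightarrow> 'a) set \<Rightarrow> 'a list set \<Rightarrow> bool" where
  "two_sided_complete X U \<longleftrightarrow> right_complete X U \<and> left_complete X U"

definition complete_bifix_decoding ::
  "(int \<Rightarrow> 'a) set \<Rightarrow> 'a list set \<Rightarrow> 'b set \<Rightarrow> ('b \<Rightarrow> 'a list) \<Rightarrow> (int \<Rightarrow> 'b) set \<Rightarrow> bool" where
  "complete_bifix_decoding X U B \<phi> Y \<longleftrightarrow> finite B \<and> bij_betw \<phi> B U \<and> shift_space B Y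
     \<and> lang Y = {v. set v \<subseteq> B \<and> concat (map \<phi> v) \<in> lang X}"

end

theory Submission
  imports Defs
begin

text \<open>
  Through the coding morphism, the extension graph of a word w of Y is isomorphic to the
  generalized extension graph E_{U,U}(\<phi>(w)) of X, whose vertices are the codewords u with
  u\<phi>(w), resp. \<phi>(w)u, in L(X).  So it suffices that E_{P,Q}(x) is a tree for every long word x
  of X whenever P is a finite complete suffix code and Q is a finite complete prefix code.
  Starting from P = Q = A, where this is eventual dendricity, we pass to arbitrary P by induction
  on the total length of P: replacing the longest words a v of P by their common suffix v changes
  E_{P,Q}(x) only by substituting, for the vertex v, the graph E_{A,Q}(v x), which is a tree; and
  substituting a tree for a vertex of a tree gives a tree.  Prefix codes Q are handled by reversal.
\<close>

section \<open>Undirected graphs\<close>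

definition ug_reach :: "'v set \<Rightarrow> ('v \<Rightarrow> 'v \<Rightarrow> bool) \<Rightarrow> 'v \<Rightarrow> 'v \<Rightarrow> bool" where
  "ug_reach V E = (\<lambda>a b. a \<in> V \<and> b \<in> V \<and> E a b)\<^sup>*\<^sup>*"

lemma ug_reach_refl [simp]: "ug_reach V E x x"
  by (simp add: ug_reach_def)

lemma ug_reach_edge: "x \<in> V \<Longrightarrow> y \<in> V \<Longrightarrow> E x y \<Longrightarrow> ug_reach V E x y"
  by (auto simp: ug_reach_def)

lemma ug_reach_trans: "ug_reach V E x y \<Longrightarrow> ug_reach V E y z \<Longrightarrow> ug_reach V E x z"
  unfolding ug_reach_def by (rule rtranclp_trans)

lemma ug_reach_hom:
  assumes "\<And>a b. a \<in> V \<Longrightarrow> b \<in> V \<Longrightarrow> E a b \<Longrightarrow> ug_reach V' E' (g a) (g b)"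
    and "ug_reach V E x y"
  shows "ug_reach V' E' (g x) (g y)"
  using assms(2) unfolding ug_reach_def
proof (induction rule: rtranclp_induct)
  case (step y z)
  then have "ug_reach V' E' (g y) (g z)" using assms(1) by blast
  then show ?case unfolding ug_reach_def by (rule rtranclp_trans[OF step.IH])
qed simp

lemma ug_reach_mono:
  assumes "ug_reach V E x y" "V \<subseteq> V'" "\<And>a b. a \<in> V \<Longrightarrow> b \<in> V \<Longrightarrow> E a b \<Longrightarrow> E' a b"
  shows "ug_reach V' E' x y"
  using ug_reach_hom[where g = "\<lambda>x. x", OF _ assms(1)] assms(2,3) by (blast intro: ug_reach_edge)

lemma ug_reach_sym:
  assumes "symp E" "ug_reach V E x y" shows "ug_reach V E y x"
  using assms(2) unfolding ug_reach_def
proof (induction rule: rtranclp_induct)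
  case (step y z)
  then show ?case using sympD[OF assms(1)] by (auto intro: converse_rtranclp_into_rtranclp)
qed simp

lemma ug_reach_path:
  "successively E p \<Longrightarrow> p \<noteq> [] \<Longrightarrow> set p \<subseteq> V \<Longrightarrow> ug_reach V E (hd p) (last p)"
proof (induction p rule: induct_list012)
  case (3 a b p)
  then have "ug_reach V E a b" "ug_reach V E b (last (b # p))" by (auto intro: ug_reach_edge)
  then show ?case by (auto intro: ug_reach_trans)
qed simp_all

lemma ug_reach_obtain_path:
  assumes "ug_reach V E x y" "x \<in> V"
  obtains p where "p \<noteq> []" "hd p = x" "last p = y" "set p \<subseteq> V" "distinct p" "successively E p"
proof -
  have "\<exists>p. p \<noteq> [] \<and> hd p = x \<and> last p = y \<and> set p \<subseteq> V \<and> distinct p \<and> successively E p"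
    using assms unfolding ug_reach_def
  proof (induction rule: rtranclp_induct)
    case base then show ?case by (intro exI[of _ "[x]"]) auto
  next
    case (step y z)
    then obtain p where p: "p \<noteq> []" "hd p = x" "last p = y" "set p \<subseteq> V" "distinct p"
      "successively E p" by auto
    show ?case
    proof (cases "z \<in> set p")
      case True
      then obtain i where i: "i < length p" "p ! i = z" by (auto simp: in_set_conv_nth)
      define q where "q = take (Suc i) p"
      have "p = q @ drop (Suc i) p" by (simp add: q_def)
      then have "successively E q" using p(6) by (metis successively_append_iff)
      moreover have "last q = z" using i by (simp add: q_def take_Suc_conv_app_nth)
      moreover have "q \<noteq> []" "hd q = x" using p i by (auto simp: q_def)
      moreover have "set q \<subseteq> V" using p(4) by (auto simp: q_def dest: in_set_takeD)
      moreover have "distinct q" using p(5) by (simp add: q_def)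
      ultimately show ?thesis by blast
    next
      case False
      then show ?thesis using p step
        by (intro exI[of _ "p @ [z]"]) (auto simp: successively_append_iff)
    qed
  qed
  then show thesis using that by blast
qed

lemma nth_chain_iff_successively:
  "(\<forall>i. i + 1 < length p \<longrightarrow> E (p ! i) (p ! (i + 1))) \<longleftrightarrow> successively E p"
  by (simp add: successively_conv_nth)

lemma ug_connected_iff_reach: "ug_connected V E \<longleftrightarrow> (\<forall>x\<in>V. \<forall>y\<in>V. ug_reach V E x y)"
  unfolding ug_connected_def nth_chain_iff_successively
  by (metis ug_reach_path ug_reach_obtain_path)

definition del_edge :: "('v \<Rightarrow> 'v \<Rightarrow> bool) \<Rightarrow> 'v \<Rightarrow> 'v \<Rightarrow> 'v \<Rightarrow> 'v \<Rightarrow> bool" where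
  "del_edge E x y = (\<lambda>a b. E a b \<and> \<not> (a = x \<and> b = y) \<and> \<not> (a = y \<and> b = x))"

lemma symp_del_edge: "symp E \<Longrightarrow> symp (del_edge E x y)"
  by (auto simp: symp_def del_edge_def)

lemma length_ge_3_cases:
  assumes "xs \<noteq> []"
  obtains a where "xs = [a]" | a b where "xs = [a, b]" | "length xs \<ge> 3"
  using assms by (cases xs; cases "tl xs"; cases "tl (tl xs)") auto

lemma ug_acyclic_iff_del_edge:
  assumes sym: "symp E" and irrefl: "irreflp E"
  shows "ug_acyclic V E \<longleftrightarrow> (\<forall>x\<in>V. \<forall>y\<in>V. E x y \<longrightarrow> \<not> ug_reach V (del_edge E x y) x y)"
proof
  assume acyclic: "ug_acyclic V E"
  show "\<forall>x\<in>V. \<forall>y\<in>V. E x y \<longrightarrow> \<not> ug_reach V (del_edge E x y) x y"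
  proof (intro ballI impI notI)
    fix x y assume xy: "x \<in> V" "y \<in> V" "E x y" "ug_reach V (del_edge E x y) x y"
    from xy(4,1) obtain p where p: "p \<noteq> []" "hd p = x" "last p = y" "set p \<subseteq> V" "distinct p"
      "successively (del_edge E x y) p" by (rule ug_reach_obtain_path)
    have "x \<noteq> y" using xy(3) irreflpD[OF irrefl] by auto
    have "length p \<ge> 3"
      using p(1) by (cases rule: length_ge_3_cases) (use p \<open>x \<noteq> y\<close> in \<open>auto simp: del_edge_def\<close>)
    moreover have "successively E p" using p(6) by (rule successively_mono) (simp add: del_edge_def)
    moreover have "E (last p) (hd p)" using p xy(3) sympD[OF sym] by auto
    ultimately show False
      using acyclic p unfolding ug_acyclic_def nth_chain_iff_successively by blast
  qed
next
  assume no_bypass: "\<forall>x\<in>V. \<forall>y\<in>V. E x y \<longrightarrow> \<not> ug_reach V (del_edge E x y) x y"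
  show "ug_acyclic V E"
  proof (unfold ug_acyclic_def nth_chain_iff_successively, rule notI, elim exE conjE)
    fix p assume p: "3 \<le> length p" "distinct p" "set p \<subseteq> V" "successively E p" "E (last p) (hd p)"
    define x y where "x = last p" and "y = hd p"
    have "p \<noteq> []" using p(1) by auto
    have x_nth: "x = p ! (length p - 1)" and y_nth: "y = p ! 0"
      using \<open>p \<noteq> []\<close> by (simp_all add: x_def y_def last_conv_nth hd_conv_nth)
    \<comment> \<open>only the closing edge of the cycle joins its last and its first vertex\<close>
    have "successively (del_edge E x y) p"
      unfolding successively_conv_nth
    proof (intro allI impI)
      fix i assume i: "Suc i < length p"
      have "p ! i \<noteq> x" using i p(2) x_nth by (simp add: nth_eq_iff_index_eq)
      moreover have "p ! Suc i \<noteq> y" using nth_eq_iff_index_eq[OF p(2) i, of 0] i y_nth by fastforce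
      moreover have "\<not> (p ! i = y \<and> p ! Suc i = x)"
      proof (rule notI, elim conjE)
        assume "p ! i = y" "p ! Suc i = x"
        have "i = 0" using \<open>p ! i = y\<close> \<open>p \<noteq> []\<close> i y_nth nth_eq_iff_index_eq[OF p(2), of i 0] by simp
        moreover have "Suc i = length p - 1"
          using \<open>p ! Suc i = x\<close> i x_nth nth_eq_iff_index_eq[OF p(2), of "Suc i" "length p - 1"]
          by simp
        ultimately show False using p(1) by simp
      qed
      ultimately show "del_edge E x y (p ! i) (p ! Suc i)"
        using p(4) i by (auto simp: del_edge_def successively_nth)
    qed
    then have "ug_reach V (del_edge E x y) y x"
      using ug_reach_path[OF _ \<open>p \<noteq> []\<close> p(3)] by (simp add: x_def y_def)
    then have "ug_reach V (del_edge E x y) x y" by (rule ug_reach_sym[OF symp_del_edge[OF sym]])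
    moreover have "x \<in> V" "y \<in> V" using p(3) \<open>p \<noteq> []\<close> by (auto simp: x_def y_def)
    ultimately show False using no_bypass p(5) by (auto simp: x_def y_def)
  qed
qed

lemma ug_tree_image:
  assumes tree: "ug_tree V E" and inj: "inj_on h V"
    and adj: "\<And>a b. a \<in> V \<Longrightarrow> b \<in> V \<Longrightarrow> E' (h a) (h b) \<longleftrightarrow> E a b"
  shows "ug_tree (h ` V) E'"
proof -
  have "ug_reach (h ` V) E' (h a) (h b)" if "ug_reach V E a b" for a b
    by (rule ug_reach_hom[OF _ that]) (use adj in \<open>auto intro: ug_reach_edge\<close>)
  then have "ug_connected (h ` V) E'"
    using tree unfolding ug_tree_def ug_connected_iff_reach by blast
  moreover have "ug_acyclic (h ` V) E'"
  proof (unfold ug_acyclic_def nth_chain_iff_successively, rule notI, elim exE conjE)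
    fix p' assume p': "3 \<le> length p'" "distinct p'" "set p' \<subseteq> h ` V" "successively E' p'"
      "E' (last p') (hd p')"
    define p where "p = map (inv_into V h) p'"
    have p'_eq: "p' = map h p"
      unfolding p_def using p'(3) by (simp add: map_idI[symmetric] subset_iff f_inv_into_f)
    have p_V: "set p \<subseteq> V" unfolding p_def using p'(3) by (auto intro: inv_into_into)
    have "successively (\<lambda>x y. E' (h x) (h y)) p" using p'(4) p'_eq by (simp add: successively_map)
    then have "successively E p" by (rule successively_mono) (use p_V adj in auto)
    moreover have "p \<noteq> []" using p'(1) p'_eq by auto
    then have "E (last p) (hd p)" using p'(5) p'_eq p_V adj
      by (simp add: last_map hd_map subset_iff)
    moreover have "distinct p" "3 \<le> length p" using p'(1,2) p'_eq by (simp_all add: distinct_map)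
    ultimately show False
      using tree p_V unfolding ug_tree_def ug_acyclic_def nth_chain_iff_successively by blast
  qed
  ultimately show ?thesis using tree by (simp add: ug_tree_def)
qed

lemma ug_tree_image_iff:
  assumes inj: "inj_on h V" and adj: "\<And>a b. a \<in> V \<Longrightarrow> b \<in> V \<Longrightarrow> E' (h a) (h b) \<longleftrightarrow> E a b"
  shows "ug_tree (h ` V) E' \<longleftrightarrow> ug_tree V E"
proof
  assume "ug_tree (h ` V) E'"
  then have "ug_tree (inv_into V h ` h ` V) E"
    by (rule ug_tree_image) (use inj adj in \<open>auto simp: inj_on_inv_into\<close>)
  then show "ug_tree V E" using inj by (simp add: image_image)
next
  assume "ug_tree V E"
  then show "ug_tree (h ` V) E'" using inj adj by (rule ug_tree_image)
qed

lemma ug_tree_star: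
  assumes sym: "symp E" and irrefl: "irreflp E" and c: "c \<in> V"
    and through_c: "\<And>a b. a \<in> V \<Longrightarrow> b \<in> V \<Longrightarrow> E a b \<Longrightarrow> a = c \<or> b = c"
    and adj_c: "\<And>v. v \<in> V \<Longrightarrow> v \<noteq> c \<Longrightarrow> E c v"
  shows "ug_tree V E"
proof -
  have "ug_reach V E c v" if "v \<in> V" for v
    using that adj_c c by (cases "v = c") (auto intro: ug_reach_edge)
  then have "ug_connected V E"
    unfolding ug_connected_iff_reach by (metis ug_reach_sym[OF sym] ug_reach_trans)
  have "\<not> ug_reach V (del_edge E c d) c d" if "d \<in> V" "d \<noteq> c" for d
  proof
    \<comment> \<open>without its edge to the centre, the leaf d is isolated\<close>
    have "z \<noteq> d" if "ug_reach V (del_edge E c d) c z" for z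
      using that unfolding ug_reach_def
    proof (induction rule: rtranclp_induct)
      case (step y z)
      then show ?case using through_c \<open>d \<noteq> c\<close> by (auto simp: del_edge_def)
    qed (use \<open>d \<noteq> c\<close> in simp)
    then show "ug_reach V (del_edge E c d) c d \<Longrightarrow> False" by blast
  qed
  moreover have "del_edge E d c = del_edge E c d" for d
    by (auto simp: del_edge_def fun_eq_iff)
  ultimately have "ug_acyclic V E"
    unfolding ug_acyclic_iff_del_edge[OF sym irrefl]
    using through_c irreflpD[OF irrefl] ug_reach_sym[OF symp_del_edge[OF sym]] by metis
  with \<open>ug_connected V E\<close> show ?thesis using c by (auto simp: ug_tree_def)
qed

text \<open>Substituting the tree M \<union> N for the vertex c of the tree V, where N is the
  neighbourhood of c and the new vertices M are adjacent only to N and to each other.\<close>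

locale tree_vertex_substitution =
  fixes V :: "'v set" and E :: "'v \<Rightarrow> 'v \<Rightarrow> bool" and c :: 'v
    and M N :: "'v set" and E' :: "'v \<Rightarrow> 'v \<Rightarrow> bool"
  assumes sym: "symp E" and irrefl: "irreflp E" and sym': "symp E'" and irrefl': "irreflp E'"
    and tree: "ug_tree V E" and c_in: "c \<in> V"
    and N_eq: "N = {v \<in> V. E c v}"
    and M_disjoint: "M \<inter> V = {}"
    and tree_MN: "ug_tree (M \<union> N) E'"
    and M_adj: "\<And>a b. a \<in> M \<Longrightarrow> b \<in> V - {c} \<union> M \<Longrightarrow> E' a b \<Longrightarrow> b \<in> N"
    and adj_agree: "\<And>a b. a \<in> V - {c} \<Longrightarrow> b \<in> V - {c} \<Longrightarrow> E' a b \<longleftrightarrow> E a b"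
begin

lemma N_subset: "N \<subseteq> V - {c}"
  using N_eq irreflpD[OF irrefl] by auto

lemma MN_subset: "M \<union> N \<subseteq> V - {c} \<union> M"
  using N_subset by auto

lemma reach_in_MN:
  "a \<in> M \<union> N \<Longrightarrow> b \<in> M \<union> N \<Longrightarrow> ug_reach (V - {c} \<union> M) E' a b"
  using tree_MN MN_subset ug_reach_mono[of "M \<union> N" E' a b "V - {c} \<union> M" E']
  by (simp add: ug_tree_def ug_connected_iff_reach)

lemma ug_connected_substituted: "ug_connected (V - {c} \<union> M) E'"
proof -
  obtain m where m: "m \<in> M \<union> N" using tree_MN by (auto simp: ug_tree_def)
  define f where "f z = (if z = c then m else z)" for z
  \<comment> \<open>collapsing c onto m turns each edge at c into a path inside M \<union> N\<close>
  have f_reach: "ug_reach (V - {c} \<union> M) E' (f a) (f b)" if "ug_reach V E a b" for a b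
  proof (rule ug_reach_hom[OF _ that])
    fix a b assume ab: "a \<in> V" "b \<in> V" "E a b"
    then consider "a = c" "b \<in> N" | "b = c" "a \<in> N" | "a \<in> V - {c}" "b \<in> V - {c}"
      using N_eq sympD[OF sym] by blast
    then show "ug_reach (V - {c} \<union> M) E' (f a) (f b)"
    proof cases
      case 1 then show ?thesis using m N_subset by (auto simp: f_def intro: reach_in_MN)
    next
      case 2 then show ?thesis using m N_subset by (auto simp: f_def intro: reach_in_MN)
    next
      case 3 then show ?thesis using ab adj_agree by (auto simp: f_def intro: ug_reach_edge)
    qed
  qed
  have "ug_reach (V - {c} \<union> M) E' m z" if z: "z \<in> V - {c} \<union> M" for z
  proof (cases "z \<in> M \<union> N")
    case True
    with m show ?thesis by (rule reach_in_MN)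
  next
    case False
    then have "z \<in> V - {c}" using z by blast
    moreover have "ug_reach V E c z"
      using tree c_in \<open>z \<in> V - {c}\<close> by (simp add: ug_tree_def ug_connected_iff_reach)
    ultimately show ?thesis using f_reach[of c z] by (simp add: f_def)
  qed
  then show ?thesis
    unfolding ug_connected_iff_reach using ug_reach_sym[OF sym'] ug_reach_trans by metis
qed

lemma tree_no_bypass: "x \<in> V \<Longrightarrow> y \<in> V \<Longrightarrow> E x y \<Longrightarrow> \<not> ug_reach V (del_edge E x y) x y"
  using tree by (simp add: ug_tree_def ug_acyclic_iff_del_edge[OF sym irrefl])

lemma N_unique_in_component:
  assumes t: "t \<in> N" and t': "t' \<in> N" and reach: "ug_reach (V - {c}) E t t'"
  shows "t = t'"
proof (rule ccontr)
  assume "t \<noteq> t'"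
  have "ug_reach V (del_edge E c t) t t'"
    using reach by (rule ug_reach_mono) (auto simp: del_edge_def)
  moreover have "ug_reach V (del_edge E c t) t' c"
    using t t' \<open>t \<noteq> t'\<close> N_eq sympD[OF sym] c_in by (auto simp: del_edge_def intro: ug_reach_edge)
  ultimately have "ug_reach V (del_edge E c t) c t"
    using ug_reach_trans ug_reach_sym[OF symp_del_edge[OF sym]] by metis
  then show False using tree_no_bypass[of c t] c_in t N_eq by auto
qed

lemma no_bypass_off_M:
  assumes x: "x \<in> V - {c}" and y: "y \<in> V - {c}" and xy: "E' x y"
  shows "\<not> ug_reach (V - {c} \<union> M) (del_edge E' x y) x y"
proof
  define g where "g z = (if z \<in> M then c else z)" for z
  assume bypass: "ug_reach (V - {c} \<union> M) (del_edge E' x y) x y"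
  have "ug_reach V (del_edge E x y) (g x) (g y)"
  proof (rule ug_reach_hom[OF _ bypass])
    fix a b assume a: "a \<in> V - {c} \<union> M" and b: "b \<in> V - {c} \<union> M" and ab: "del_edge E' x y a b"
    then consider "a \<in> M" "b \<in> N" | "b \<in> M" "a \<in> N" | "a \<in> V - {c}" "b \<in> V - {c}"
      using M_adj sympD[OF sym'] by (auto simp: del_edge_def)
    then show "ug_reach V (del_edge E x y) (g a) (g b)"
    proof cases
      case 1 then show ?thesis
        using x y N_eq N_subset M_disjoint c_in
          by (auto simp: g_def del_edge_def intro!: ug_reach_edge)
    next
      case 2 then show ?thesis
        using x y N_eq N_subset M_disjoint c_in sympD[OF sym]
        by (auto simp: g_def del_edge_def intro!: ug_reach_edge)
    next
      case 3 then show ?thesis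
        using ab adj_agree M_disjoint by (auto simp: g_def del_edge_def intro!: ug_reach_edge)
    qed
  qed
  moreover have "x \<notin> M" "y \<notin> M" using x y M_disjoint by auto
  ultimately have "ug_reach V (del_edge E x y) x y" by (simp add: g_def)
  then show False using tree_no_bypass x y xy adj_agree by auto
qed

definition component_root :: "'v \<Rightarrow> 'v" where
  "component_root z = (if z \<in> M \<union> N then z else (SOME t. t \<in> N \<and> ug_reach (V - {c}) E t z))"

lemma component_root_eq:
  assumes t: "t \<in> N" and reach: "ug_reach (V - {c}) E t z" and "z \<notin> M"
  shows "component_root z = t"
proof (cases "z \<in> N")
  case True
  then show ?thesis using N_unique_in_component[OF t True reach] by (simp add: component_root_def)
next
  case False
  have "t' = t" if "t' \<in> N \<and> ug_reach (V - {c}) E t' z" for t'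
    using that t reach N_unique_in_component ug_reach_trans ug_reach_sym[OF sym] by metis
  then have "(SOME t. t \<in> N \<and> ug_reach (V - {c}) E t z) = t"
    using t reach by (blast intro: some_equality)
  then show ?thesis using False \<open>z \<notin> M\<close> by (simp add: component_root_def)
qed

lemma component_root_cong:
  assumes "ug_reach (V - {c}) E a b" "a \<notin> M \<union> N" "b \<notin> M \<union> N"
  shows "component_root a = component_root b"
proof -
  have "ug_reach (V - {c}) E t a \<longleftrightarrow> ug_reach (V - {c}) E t b" for t
    using assms(1) ug_reach_trans ug_reach_sym[OF sym] by metis
  then show ?thesis using assms(2,3) by (simp add: component_root_def)
qed

lemma no_bypass_at_M:
  assumes x: "x \<in> V - {c} \<union> M" and y: "y \<in> V - {c} \<union> M" and xy: "E' x y"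
    and at_M: "x \<in> M \<or> y \<in> M"
  shows "\<not> ug_reach (V - {c} \<union> M) (del_edge E' x y) x y"
proof
  assume bypass: "ug_reach (V - {c} \<union> M) (del_edge E' x y) x y"
  have xy_MN: "x \<in> M \<union> N" "y \<in> M \<union> N"
    using at_M M_adj x y xy sympD[OF sym'] by blast+
  \<comment> \<open>the part of the new tree outside M \<union> N consists of the components of V - {c}
    hanging off the vertices of N; collapse each of them onto its vertex in N\<close>
  have "ug_reach (M \<union> N) (del_edge E' x y) (component_root x) (component_root y)"
  proof (rule ug_reach_hom[OF _ bypass])
    fix a b assume a: "a \<in> V - {c} \<union> M" and b: "b \<in> V - {c} \<union> M" and ab: "del_edge E' x y a b"
    have E'_ab: "E' a b" using ab by (simp add: del_edge_def)
    consider "a \<in> M \<union> N" "b \<in> M \<union> N" | "a \<in> N" "b \<notin> M \<union> N" | "b \<in> N" "a \<notin> M \<union> N"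
      | "a \<notin> M \<union> N" "b \<notin> M \<union> N"
      using M_adj a b E'_ab sympD[OF sym'] by blast
    then show "ug_reach (M \<union> N) (del_edge E' x y) (component_root a) (component_root b)"
    proof cases
      case 1 then show ?thesis using ab by (auto simp: component_root_def intro: ug_reach_edge)
    next
      case 2
      then have "ug_reach (V - {c}) E a b" using a b E'_ab adj_agree N_subset
        by (auto intro: ug_reach_edge)
      then show ?thesis using 2 component_root_eq[of a b] by (simp add: component_root_def)
    next
      case 3
      then have "b \<in> V - {c}" "a \<in> V - {c}" using a N_subset by auto
      then have "ug_reach (V - {c}) E b a"
        using adj_agree sympD[OF sym' E'_ab] by (auto intro: ug_reach_edge)
      then show ?thesis using 3 component_root_eq[of b a] by (simp add: component_root_def)
    next
      case 4
      then have "ug_reach (V - {c}) E a b" using a b E'_ab adj_agree by (auto intro: ug_reach_edge)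
      then show ?thesis using 4 component_root_cong by simp
    qed
  qed
  then have "ug_reach (M \<union> N) (del_edge E' x y) x y" using xy_MN by (simp add: component_root_def)
  then show False using tree_MN xy_MN xy
    by (auto simp: ug_tree_def ug_acyclic_iff_del_edge[OF sym' irrefl'])
qed

theorem ug_tree_substituted: "ug_tree (V - {c} \<union> M) E'"
proof -
  have "ug_acyclic (V - {c} \<union> M) E'"
    unfolding ug_acyclic_iff_del_edge[OF sym' irrefl']
    using no_bypass_off_M no_bypass_at_M by blast
  moreover have "V - {c} \<union> M \<noteq> {}" using tree_MN MN_subset by (auto simp: ug_tree_def)
  ultimately show ?thesis using ug_connected_substituted by (simp add: ug_tree_def)
qed

end

section \<open>Factorial languages and codes\<close>

definition factor_closed :: "'a list set \<Rightarrow> bool" where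
  "factor_closed L \<longleftrightarrow> (\<forall>x y. x @ y \<in> L \<longrightarrow> x \<in> L \<and> y \<in> L)"

lemma factor_closed_prefix: "factor_closed L \<Longrightarrow> x @ y \<in> L \<Longrightarrow> x \<in> L"
  unfolding factor_closed_def by blast

lemma factor_closed_suffix: "factor_closed L \<Longrightarrow> x @ y \<in> L \<Longrightarrow> y \<in> L"
  unfolding factor_closed_def by blast

lemma factor_closed_tl: "factor_closed L \<Longrightarrow> a # y \<in> L \<Longrightarrow> y \<in> L"
  using factor_closed_suffix[of L "[a]" y] by simp

definition left_extendable :: "'a list set \<Rightarrow> bool" where
  "left_extendable L \<longleftrightarrow> (\<forall>y\<in>L. \<exists>a. a # y \<in> L)"

definition right_extendable :: "'a list set \<Rightarrow> bool" where
  "right_extendable L \<longleftrightarrow> (\<forall>y\<in>L. \<exists>a. y @ [a] \<in> L)"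

definition suffix_code :: "'a list set \<Rightarrow> bool" where
  "suffix_code P \<longleftrightarrow> (\<forall>x\<in>P. \<forall>y\<in>P. \<not> strict_suffix x y)"

definition prefix_code :: "'a list set \<Rightarrow> bool" where
  "prefix_code P \<longleftrightarrow> (\<forall>x\<in>P. \<forall>y\<in>P. \<not> strict_prefix x y)"

definition left_complete_in :: "'a list set \<Rightarrow> 'a list set \<Rightarrow> bool" where
  "left_complete_in L P \<longleftrightarrow> (\<exists>N. \<forall>y\<in>L. N \<le> length y \<longrightarrow> (\<exists>x\<in>P. suffix x y))"

definition right_complete_in :: "'a list set \<Rightarrow> 'a list set \<Rightarrow> bool" where
  "right_complete_in L P \<longleftrightarrow> (\<exists>N. \<forall>y\<in>L. N \<le> length y \<longrightarrow> (\<exists>x\<in>P. prefix x y))"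

lemma suffix_code_Nil:
  assumes "suffix_code P" "[] \<in> P" shows "P = {[]}"
proof -
  have "strict_suffix [] p" if "p \<noteq> []" for p :: "'a list"
    using that by (auto simp: strict_suffix_def)
  then show ?thesis using assms unfolding suffix_code_def by blast
qed

lemma prefix_code_Nil:
  assumes "prefix_code P" "[] \<in> P" shows "P = {[]}"
proof -
  have "strict_prefix [] p" if "p \<noteq> []" for p :: "'a list"
    using that by (auto simp: strict_prefix_def)
  then show ?thesis using assms unfolding prefix_code_def by blast
qed

lemma left_extendable_power:
  assumes ext: "left_extendable L" and y: "y \<in> L" shows "\<exists>z. length z = k \<and> z @ y \<in> L"
proof (induction k)
  case 0 show ?case using y by simp
next
  case (Suc k)
  then obtain z where z: "length z = k" "z @ y \<in> L" by blast
  then obtain a where "a # z @ y \<in> L" using ext by (auto simp: left_extendable_def)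
  with z show ?case by (intro exI[of _ "a # z"]) simp
qed

lemma left_complete_in_nonempty:
  assumes "left_extendable L" "left_complete_in L P" "w \<in> L" shows "P \<noteq> {}"
proof -
  obtain N where N: "\<And>y. y \<in> L \<Longrightarrow> N \<le> length y \<Longrightarrow> \<exists>x\<in>P. suffix x y"
    using assms(2) by (auto simp: left_complete_in_def)
  obtain z where "length z = N" "z @ w \<in> L" using left_extendable_power[OF assms(1,3)] by blast
  then show ?thesis using N[of "z @ w"] by auto
qed

lemma finite_obtain_longest:
  assumes "finite P" "P \<noteq> {}" "[] \<notin> P"
  obtains a v where "a # v \<in> P" "\<And>p. p \<in> P \<Longrightarrow> length p \<le> Suc (length v)"
proof -
  have "Max (length ` P) \<in> length ` P" using assms(1,2) by (intro Max_in) auto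
  then obtain u where u: "u \<in> P" "length u = Max (length ` P)" by auto
  with assms(3) obtain a v where "u = a # v" by (cases u) auto
  with u assms(1) show thesis by (intro that) auto
qed

definition left_contraction :: "'a list set \<Rightarrow> 'a list \<Rightarrow> 'a list set" where
  "left_contraction P v = {p \<in> P. \<forall>b. p \<noteq> b # v} \<union> {v}"

lemma suffix_code_left_contraction:
  assumes code: "suffix_code P" and u: "a # v \<in> P"
    and longest: "\<And>p. p \<in> P \<Longrightarrow> length p \<le> Suc (length v)"
  shows "suffix_code (left_contraction P v)"
  unfolding suffix_code_def
proof (intro ballI notI)
  fix x y assume x: "x \<in> left_contraction P v" and y: "y \<in> left_contraction P v"
    and xy: "strict_suffix x y"
  show False
  proof (cases "x = v")
    case True
    then have y_P: "y \<in> P" "\<forall>b. y \<noteq> b # v" using x y xy by (auto simp: left_contraction_def)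
    obtain zs where y_eq: "y = zs @ v" using xy True by (auto simp: strict_suffix_def suffix_def)
    have "length v < length y" using xy True by (simp add: suffix_length_less)
    then have "length zs = 1" using longest[OF y_P(1)] y_eq by (simp add: le_Suc_eq)
    then show False using y_P(2) y_eq by (cases zs) auto
  next
    case False
    then have x_P: "x \<in> P" using x by (simp add: left_contraction_def)
    show False
    proof (cases "y = v")
      case True
      then have "suffix x (a # v)" "length x < length (a # v)"
        using xy by (auto simp: strict_suffix_def suffix_ConsI dest: suffix_length_le)
      then have "strict_suffix x (a # v)" by (auto simp: strict_suffix_def)
      then show False using code x_P u by (auto simp: suffix_code_def)
    next
      case False
      then show False using code x_P y xy by (auto simp: suffix_code_def left_contraction_def)
    qed
  qed
qed

lemma left_complete_in_left_contraction:
  assumes "left_complete_in L P" shows "left_complete_in L (left_contraction P v)"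
proof -
  have "\<exists>x'\<in>left_contraction P v. suffix x' y" if "x \<in> P" "suffix x y" for x y
  proof (cases "\<exists>b. x = b # v")
    case True
    then have "suffix v y" using that(2) by (auto dest: suffix_ConsD)
    then show ?thesis by (auto simp: left_contraction_def)
  next
    case False
    then show ?thesis using that by (auto simp: left_contraction_def)
  qed
  then show ?thesis using assms unfolding left_complete_in_def by meson
qed

lemma sum_length_left_contraction:
  assumes "finite P" "a # v \<in> P" "v \<notin> P"
  shows "sum length (left_contraction P v) < sum length P"
proof -
  define S where "S = {p \<in> P. \<exists>b. p = b # v}"
  have "left_contraction P v = insert v (P - S)" by (auto simp: left_contraction_def S_def)
  then have "sum length (left_contraction P v) = length v + sum length (P - S)"
    using assms by simp
  moreover have "length (a # v) \<le> sum length S"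
    using assms by (intro member_le_sum) (auto simp: S_def)
  moreover have "sum length P = sum length (P - S) + sum length S"
    using assms(1) by (intro sum.subset_diff) (auto simp: S_def)
  ultimately show ?thesis by simp
qed

lemma left_complete_sibling:
  assumes ext: "left_extendable L" and complete: "left_complete_in L P" and code: "suffix_code P"
    and u: "a # v \<in> P" and longest: "\<And>p. p \<in> P \<Longrightarrow> length p \<le> Suc (length v)"
    and bv: "b # v \<in> L"
  shows "b # v \<in> P"
proof -
  obtain N where N: "\<And>y. y \<in> L \<Longrightarrow> N \<le> length y \<Longrightarrow> \<exists>x\<in>P. suffix x y"
    using complete by (auto simp: left_complete_in_def)
  obtain z where "length z = N" "z @ b # v \<in> L"
    using left_extendable_power[OF ext bv] by blast
  then obtain x where x: "x \<in> P" "suffix x (z @ b # v)" using N by fastforce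
  \<comment> \<open>no word of P is longer than b # v, so the suffix x of z @ b # v is a suffix of b # v\<close>
  have "suffix x (b # v)"
    using suffix_length_suffix[OF x(2), of "b # v"] longest[OF x(1)] by (simp add: suffix_appendI)
  then consider "x = b # v" | "suffix x v" by (auto simp: suffix_Cons)
  then show ?thesis
  proof cases
    case 2
    then have "strict_suffix x (a # v)"
      by (auto simp: strict_suffix_def suffix_ConsI dest: suffix_length_le)
    then show ?thesis using code x(1) u by (auto simp: suffix_code_def)
  qed (use x in simp)
qed

lemma rev_image_iff: "x \<in> rev ` S \<longleftrightarrow> rev x \<in> S"
  by (metis image_iff rev_rev_ident)

lemma rev_image_rev_image: "rev ` rev ` S = S"
  by (simp add: image_image)

lemma factor_closed_rev_image:
  assumes "factor_closed L" shows "factor_closed (rev ` L)"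
  unfolding factor_closed_def
proof (intro allI impI)
  fix x y assume "x @ y \<in> rev ` L"
  then have "rev y @ rev x \<in> L" by (simp add: rev_image_iff)
  then have "rev y \<in> L" "rev x \<in> L"
    by (rule factor_closed_prefix[OF assms], rule factor_closed_suffix[OF assms])
  then show "x \<in> rev ` L \<and> y \<in> rev ` L" by (simp add: rev_image_iff)
qed

lemma left_extendable_rev_image:
  assumes "right_extendable L" shows "left_extendable (rev ` L)"
  unfolding left_extendable_def
proof
  fix y assume "y \<in> rev ` L"
  then have "rev y \<in> L" by (simp add: rev_image_iff)
  then obtain a where "rev y @ [a] \<in> L" using assms unfolding right_extendable_def by blast
  then have "a # y \<in> rev ` L" by (simp add: rev_image_iff)
  then show "\<exists>a. a # y \<in> rev ` L" ..
qed

lemma suffix_code_rev_image: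
  assumes "prefix_code P" shows "suffix_code (rev ` P)"
  unfolding suffix_code_def
proof (intro ballI notI)
  fix x y assume "x \<in> rev ` P" "y \<in> rev ` P" "strict_suffix x y"
  then have "rev x \<in> P" "rev y \<in> P" "strict_prefix (rev x) (rev y)"
    by (simp_all add: rev_image_iff strict_suffix_to_prefix)
  then show False using assms unfolding prefix_code_def by blast
qed

lemma left_complete_in_rev_image:
  assumes "right_complete_in L P" shows "left_complete_in (rev ` L) (rev ` P)"
proof -
  obtain N where N: "\<And>y. y \<in> L \<Longrightarrow> N \<le> length y \<Longrightarrow> \<exists>x\<in>P. prefix x y"
    using assms by (auto simp: right_complete_in_def)
  have "\<exists>x\<in>rev ` P. suffix x y" if "y \<in> rev ` L" "N \<le> length y" for y
  proof -
    have "rev y \<in> L" "N \<le> length (rev y)" using that by (simp_all add: rev_image_iff)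
    then obtain x where "x \<in> P" "prefix x (rev y)" using N by blast
    then have "rev x \<in> rev ` P" "suffix (rev x) y" by (simp_all add: suffix_to_prefix)
    then show ?thesis by blast
  qed
  then show ?thesis unfolding left_complete_in_def by blast
qed

section \<open>Extension graphs\<close>

text \<open>The extension graph E_{P,Q}(w): left vertices the p \<in> P with p w \<in> L, right vertices the
  q \<in> Q with w q \<in> L; E_1(w) is the case P = Q = letters.\<close>

fun gen_ext_adj :: "'a list set \<Rightarrow> 'a list \<Rightarrow> 'a list + 'a list \<Rightarrow> 'a list + 'a list \<Rightarrow> bool" where
  "gen_ext_adj L w (Inl p) (Inr q) \<longleftrightarrow> p @ w @ q \<in> L"
| "gen_ext_adj L w (Inr q) (Inl p) \<longleftrightarrow> p @ w @ q \<in> L"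
| "gen_ext_adj L w _ _ \<longleftrightarrow> False"

definition gen_ext_vertices ::
  "'a list set \<Rightarrow> 'a list set \<Rightarrow> 'a list set \<Rightarrow> 'a list \<Rightarrow> ('a list + 'a list) set" where
  "gen_ext_vertices L P Q w = Inl ` {p \<in> P. p @ w \<in> L} \<union> Inr ` {q \<in> Q. w @ q \<in> L}"

abbreviation gen_ext_tree :: "'a list set \<Rightarrow> 'a list set \<Rightarrow> 'a list set \<Rightarrow> 'a list \<Rightarrow> bool" where
  "gen_ext_tree L P Q w \<equiv> ug_tree (gen_ext_vertices L P Q w) (gen_ext_adj L w)"

abbreviation letters :: "'a list set" where
  "letters \<equiv> range (\<lambda>a. [a])"

lemma symp_gen_ext_adj: "symp (gen_ext_adj L w)"
proof (rule sympI)
  fix x y show "gen_ext_adj L w x y \<Longrightarrow> gen_ext_adj L w y x" by (cases x; cases y) auto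
qed

lemma irreflp_gen_ext_adj: "irreflp (gen_ext_adj L w)"
proof (rule irreflpI)
  fix x show "\<not> gen_ext_adj L w x x" by (cases x) auto
qed

lemma gen_ext_tree_Nil: "w \<in> L \<Longrightarrow> gen_ext_tree L {[]} Q w"
  by (rule ug_tree_star[OF symp_gen_ext_adj irreflp_gen_ext_adj, where c = "Inl []"])
     (auto simp: gen_ext_vertices_def)

lemma ug_tree_extension_shift:
  assumes "gen_ext_tree L letters Q (v @ w)"
  shows "ug_tree (Inl ` {b # v | b. b # v @ w \<in> L} \<union> Inr ` {q \<in> Q. v @ w @ q \<in> L})
    (gen_ext_adj L w)"
proof -
  define h :: "'a list + 'a list \<Rightarrow> 'a list + 'a list" where "h = map_sum (\<lambda>p. p @ v) id"
  have "ug_tree (h ` gen_ext_vertices L letters Q (v @ w)) (gen_ext_adj L w)"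
  proof (rule ug_tree_image[OF assms])
    show "inj_on h (gen_ext_vertices L letters Q (v @ w))"
      by (rule inj_onI) (auto simp: h_def gen_ext_vertices_def)
  qed (auto simp: h_def gen_ext_vertices_def)
  moreover have "h ` gen_ext_vertices L letters Q (v @ w)
      = Inl ` (\<lambda>p. p @ v) ` {p \<in> letters. p @ v @ w \<in> L} \<union> Inr ` {q \<in> Q. v @ w @ q \<in> L}"
    by (simp add: gen_ext_vertices_def h_def image_Un image_image)
  moreover have "(\<lambda>p. p @ v) ` {p \<in> letters. p @ v @ w \<in> L} = {b # v | b. b # v @ w \<in> L}"
    by auto
  ultimately show ?thesis by simp
qed

lemma gen_ext_tree_left_contraction:
  assumes fac: "factor_closed L"
    and siblings: "\<And>b. b # v \<in> L \<Longrightarrow> b # v \<in> P" and v_notin: "v \<notin> P"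
    and tree': "gen_ext_tree L (left_contraction P v) Q w"
    and tree_v: "v @ w \<in> L \<Longrightarrow> gen_ext_tree L letters Q (v @ w)"
  shows "gen_ext_tree L P Q w"
proof (cases "v @ w \<in> L")
  case False
  then have "b # v @ w \<notin> L" for b using factor_closed_tl[OF fac] by blast
  then have "{p \<in> P. p @ w \<in> L} = {p \<in> left_contraction P v. p @ w \<in> L}"
    using False by (auto simp: left_contraction_def)
  then show ?thesis using tree' by (simp add: gen_ext_vertices_def)
next
  case True
  define V where "V = gen_ext_vertices L (left_contraction P v) Q w"
  define M :: "('a list + 'a list) set" where "M = Inl ` {b # v | b. b # v @ w \<in> L}"
  define N :: "('a list + 'a list) set" where "N = Inr ` {q \<in> Q. v @ w @ q \<in> L}"
  have tree_MN: "ug_tree (M \<union> N) (gen_ext_adj L w)"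
    unfolding M_def N_def by (rule ug_tree_extension_shift[OF tree_v[OF True]])
  have vertices: "gen_ext_vertices L P Q w = V - {Inl v} \<union> M"
  proof -
    have "b # v \<in> P" if "b # v @ w \<in> L" for b
      using siblings factor_closed_prefix[OF fac, of "b # v" w] that by simp
    then show ?thesis using v_notin
      by (auto simp: gen_ext_vertices_def V_def M_def left_contraction_def)
  qed
  interpret tree_vertex_substitution V "gen_ext_adj L w" "Inl v" M N "gen_ext_adj L w"
  proof
    show "ug_tree V (gen_ext_adj L w)" using tree' by (simp add: V_def)
    show "Inl v \<in> V" using True by (simp add: V_def gen_ext_vertices_def left_contraction_def)
    show "N = {x \<in> V. gen_ext_adj L w (Inl v) x}"
      using factor_closed_suffix[OF fac, of v] by (auto simp: V_def N_def gen_ext_vertices_def)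
    show "ug_tree (M \<union> N) (gen_ext_adj L w)" by (rule tree_MN)
    show "M \<inter> V = {}" by (auto simp: V_def M_def gen_ext_vertices_def left_contraction_def)
    fix x y assume "x \<in> M" "y \<in> V - {Inl v} \<union> M" "gen_ext_adj L w x y"
    then show "y \<in> N"
      using factor_closed_tl[OF fac]
      by (auto simp: V_def M_def N_def gen_ext_vertices_def elim!: gen_ext_adj.elims)
  qed (simp_all add: symp_gen_ext_adj irreflp_gen_ext_adj)
  show ?thesis using ug_tree_substituted vertices by simp
qed

lemma gen_ext_tree_left_code:
  assumes fac: "factor_closed L" and ext: "left_extendable L"
    and dendric: "\<And>x. x \<in> L \<Longrightarrow> m \<le> length x \<Longrightarrow> gen_ext_tree L letters Q x"
    and w: "w \<in> L" "m \<le> length w"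
    and code: "finite P" "suffix_code P" "left_complete_in L P"
  shows "gen_ext_tree L P Q w"
  using code
proof (induction "sum length P" arbitrary: P rule: less_induct)
  case less
  show ?case
  proof (cases "[] \<in> P")
    case True
    then show ?thesis using suffix_code_Nil[OF less.prems(2)] gen_ext_tree_Nil[OF w(1)] by simp
  next
    case False
    obtain a v where a_v: "a # v \<in> P" and longest: "\<And>p. p \<in> P \<Longrightarrow> length p \<le> Suc (length v)"
      using finite_obtain_longest[OF less.prems(1)
          left_complete_in_nonempty[OF ext less.prems(3) w(1)] False] by blast
    have "strict_suffix v (a # v)" by (simp add: strict_suffix_def suffix_ConsI)
    then have v_notin: "v \<notin> P" using less.prems(2) a_v unfolding suffix_code_def by blast
    have "b # v \<in> P" if "b # v \<in> L" for b
      by (rule left_complete_sibling[OF ext less.prems(3,2) a_v longest that])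
    moreover have "gen_ext_tree L (left_contraction P v) Q w"
    proof (rule less.hyps)
      show "sum length (left_contraction P v) < sum length P"
        by (rule sum_length_left_contraction[OF less.prems(1) a_v v_notin])
      show "finite (left_contraction P v)" using less.prems(1) by (simp add: left_contraction_def)
      show "suffix_code (left_contraction P v)"
        by (rule suffix_code_left_contraction[OF less.prems(2) a_v longest])
      show "left_complete_in L (left_contraction P v)"
        by (rule left_complete_in_left_contraction[OF less.prems(3)])
    qed
    moreover have "gen_ext_tree L letters Q (v @ w)" if "v @ w \<in> L"
      using dendric that w(2) by simp
    ultimately show ?thesis by (rule gen_ext_tree_left_contraction[OF fac _ v_notin])
  qed
qed

lemma gen_ext_tree_rev:
  assumes "gen_ext_tree L P Q w"
  shows "gen_ext_tree (rev ` L) (rev ` Q) (rev ` P) (rev w)"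
proof -
  define h :: "'a list + 'a list \<Rightarrow> 'a list + 'a list" where
    "h = case_sum (\<lambda>p. Inr (rev p)) (\<lambda>q. Inl (rev q))"
  have "ug_tree (h ` gen_ext_vertices L P Q w) (gen_ext_adj (rev ` L) (rev w))"
  proof (rule ug_tree_image[OF assms])
    show "inj_on h (gen_ext_vertices L P Q w)"
      by (rule inj_onI) (auto simp: h_def split: sum.splits)
    fix a b show "gen_ext_adj (rev ` L) (rev w) (h a) (h b) \<longleftrightarrow> gen_ext_adj L w a b"
      by (cases a; cases b) (simp_all add: h_def rev_image_iff)
  qed
  moreover have
    "h ` gen_ext_vertices L P Q w = gen_ext_vertices (rev ` L) (rev ` Q) (rev ` P) (rev w)"
  proof -
    have "{p \<in> rev ` P. rev w @ p \<in> rev ` L} = rev ` {p \<in> P. p @ w \<in> L}"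
      "{q \<in> rev ` Q. q @ rev w \<in> rev ` L} = rev ` {q \<in> Q. w @ q \<in> L}"
      by (simp_all add: set_eq_iff rev_image_iff)
    then show ?thesis
      by (simp add: gen_ext_vertices_def h_def image_Un image_image Un_commute)
  qed
  ultimately show ?thesis by simp
qed

lemma rev_image_letters: "rev ` letters = letters"
  by (simp add: image_image)

lemma gen_ext_tree_right_code:
  assumes fac: "factor_closed L" and ext: "right_extendable L"
    and dendric: "\<And>x. x \<in> L \<Longrightarrow> m \<le> length x \<Longrightarrow> gen_ext_tree L letters letters x"
    and w: "w \<in> L" "m \<le> length w"
    and code: "finite Q" "prefix_code Q" "right_complete_in L Q"
  shows "gen_ext_tree L letters Q w"
proof -
  have "gen_ext_tree (rev ` L) (rev ` Q) letters (rev w)"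
  proof (rule gen_ext_tree_left_code[OF factor_closed_rev_image[OF fac]
        left_extendable_rev_image[OF ext]])
    fix x assume "x \<in> rev ` L" "m \<le> length x"
    then have "gen_ext_tree L letters letters (rev x)" by (simp add: dendric rev_image_iff)
    from gen_ext_tree_rev[OF this] show "gen_ext_tree (rev ` L) letters letters x"
      by (simp only: rev_image_letters rev_rev_ident)
  next
    show "rev w \<in> rev ` L" "m \<le> length (rev w)" "finite (rev ` Q)" using w code(1) by simp_all
    show "suffix_code (rev ` Q)" by (rule suffix_code_rev_image[OF code(2)])
    show "left_complete_in (rev ` L) (rev ` Q)" by (rule left_complete_in_rev_image[OF code(3)])
  qed
  from gen_ext_tree_rev[OF this] show ?thesis
    by (simp only: rev_image_letters rev_rev_ident rev_image_rev_image)
qed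

lemma gen_ext_tree_bifix_code:
  assumes fac: "factor_closed L" and ext: "left_extendable L" "right_extendable L"
    and dendric: "\<And>x. x \<in> L \<Longrightarrow> m \<le> length x \<Longrightarrow> gen_ext_tree L letters letters x"
    and w: "w \<in> L" "m \<le> length w"
    and U: "finite U" "prefix_code U" "suffix_code U" "right_complete_in L U" "left_complete_in L U"
  shows "gen_ext_tree L U U w"
proof (rule gen_ext_tree_left_code[OF fac ext(1) _ w U(1,3,5)])
  fix x assume "x \<in> L" "m \<le> length x"
  with U(1,2,4) show "gen_ext_tree L letters U x"
    using gen_ext_tree_right_code[OF fac ext(2) dendric] by blast
qed

section \<open>Shift spaces and their decodings\<close>

lemma factor_add: "factor x i (m + k) = factor x i m @ factor x (i + int m) k"
proof -
  have "[0..<m + k] = [0..<m] @ map (\<lambda>j. j + m) [0..<k]"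
    by (simp add: upt_add_eq_append[of 0 m k] map_add_upt add.commute[of k m])
  then show ?thesis by (simp add: factor_def algebra_simps)
qed

lemma factor_closed_lang: "factor_closed (lang X)"
  unfolding factor_closed_def
proof (intro allI impI)
  fix u v assume "u @ v \<in> lang X"
  then obtain x i where
    "x \<in> X" "u @ v = factor x i (length u) @ factor x (i + int (length u)) (length v)"
    by (auto simp: lang_def factor_add)
  then show "u \<in> lang X \<and> v \<in> lang X"
    by (auto simp: lang_def append_eq_append_conv factor_def)
qed

lemma left_extendable_lang: "left_extendable (lang X)"
  unfolding left_extendable_def
proof
  fix v assume "v \<in> lang X"
  then obtain x i where "x \<in> X" "v = factor x i (length v)" by (auto simp: lang_def)
  then have "x (i - 1) # v = factor x (i - 1) (length (x (i - 1) # v))"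
    using factor_add[of x "i - 1" 1 "length v"] by (simp add: factor_def)
  then show "\<exists>a. a # v \<in> lang X" using \<open>x \<in> X\<close> by (auto simp: lang_def)
qed

lemma right_extendable_lang: "right_extendable (lang X)"
  unfolding right_extendable_def
proof
  fix v assume "v \<in> lang X"
  then obtain x i where "x \<in> X" "v = factor x i (length v)" by (auto simp: lang_def)
  then have "v @ [x (i + int (length v))] = factor x i (length (v @ [x (i + int (length v))]))"
    using factor_add[of x i "length v" 1] by (simp add: factor_def)
  then show "\<exists>a. v @ [a] \<in> lang X" using \<open>x \<in> X\<close> by (auto simp: lang_def)
qed

lemma bifix_code_iff: "bifix_code U \<longleftrightarrow> prefix_code U \<and> suffix_code U"
  by (auto simp: bifix_code_def prefix_code_def suffix_code_def)

lemma two_sided_complete_iff: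
  "two_sided_complete X U \<longleftrightarrow> right_complete_in (lang X) U \<and> left_complete_in (lang X) U"
  by (simp add: two_sided_complete_def right_complete_def left_complete_def
      right_complete_in_def left_complete_in_def)

lemma ext_tree_iff_gen_ext_tree:
  assumes inj: "inj_on f S"
    and left: "\<And>a. a # w' \<in> L' \<longleftrightarrow> a \<in> S \<and> f a @ w \<in> L"
    and right: "\<And>b. w' @ [b] \<in> L' \<longleftrightarrow> b \<in> S \<and> w @ f b \<in> L"
    and both: "\<And>a b. a # w' @ [b] \<in> L' \<longleftrightarrow> a \<in> S \<and> b \<in> S \<and> f a @ w @ f b \<in> L"
  shows "ug_tree (ext_vertices L' w') (ext_adj L' w') \<longleftrightarrow> gen_ext_tree L (f ` S) (f ` S) w"
proof -
  define h where "h = map_sum f f"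
  have vertices: "ext_vertices L' w' = Inl ` {a \<in> S. f a @ w \<in> L} \<union> Inr ` {b \<in> S. w @ f b \<in> L}"
    by (simp add: ext_vertices_def left right)
  have "{p \<in> f ` S. p @ w \<in> L} = f ` {a \<in> S. f a @ w \<in> L}"
    "{q \<in> f ` S. w @ q \<in> L} = f ` {b \<in> S. w @ f b \<in> L}" by auto
  then have "h ` ext_vertices L' w' = gen_ext_vertices L (f ` S) (f ` S) w"
    by (simp add: vertices gen_ext_vertices_def h_def image_Un image_image)
  moreover have "inj_on h (ext_vertices L' w')"
  proof (rule inj_onI)
    fix u v assume "u \<in> ext_vertices L' w'" "v \<in> ext_vertices L' w'" "h u = h v"
    then show "u = v" by (cases u; cases v) (auto simp: vertices h_def dest: inj_onD[OF inj])
  qed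
  moreover have "gen_ext_adj L w (h u) (h v) \<longleftrightarrow> ext_adj L' w' u v"
    if "u \<in> ext_vertices L' w'" "v \<in> ext_vertices L' w'" for u v
    using that by (cases u; cases v) (auto simp: vertices h_def both)
  ultimately show ?thesis using ug_tree_image_iff by metis
qed

lemma gen_ext_tree_letters_if_eventually_dendric:
  assumes "eventually_dendric X n" "w \<in> lang X" "n \<le> length w"
  shows "gen_ext_tree (lang X) letters letters w"
proof -
  have "ug_tree (ext_vertices (lang X) w) (ext_adj (lang X) w)"
    using assms by (simp add: eventually_dendric_def)
  moreover have "inj_on (\<lambda>a. [a]) UNIV" by (rule inj_onI) simp
  ultimately show ?thesis
    using ext_tree_iff_gen_ext_tree[where f = "\<lambda>a. [a]" and S = UNIV
        and L' = "lang X" and L = "lang X"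
        and w' = w and w = w]
    by simp
qed

lemma gen_ext_tree_complete_bifix_code:
  assumes dendric: "eventually_dendric X n"
    and U: "finite U" "bifix_code U" "two_sided_complete X U"
    and w: "w \<in> lang X" "n \<le> length w"
  shows "gen_ext_tree (lang X) U U w"
  using U(2,3) unfolding bifix_code_iff two_sided_complete_iff
  by (intro gen_ext_tree_bifix_code[OF factor_closed_lang left_extendable_lang right_extendable_lang
        gen_ext_tree_letters_if_eventually_dendric[OF dendric] w U(1)]) auto

lemma length_le_length_concat_map:
  "(\<And>b. b \<in> set w \<Longrightarrow> f b \<noteq> []) \<Longrightarrow> length w \<le> length (concat (map f w))"
proof (induction w)
  case (Cons a w)
  then have "f a \<noteq> []" "length w \<le> length (concat (map f w))" by auto
  then show ?case by (cases "f a") auto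
qed simp

lemma gen_ext_tree_decoding:
  assumes dendric: "eventually_dendric X n"
    and U: "finite U" "bifix_code U" "two_sided_complete X U"
    and code: "\<phi> ` B = U" and w: "set w \<subseteq> B" "concat (map \<phi> w) \<in> lang X" "n \<le> length w"
  shows "gen_ext_tree (lang X) U U (concat (map \<phi> w))"
proof (cases "[] \<in> U")
  case True
  then have "U = {[]}" using U(2) prefix_code_Nil[of U] by (simp add: bifix_code_iff)
  then show ?thesis using gen_ext_tree_Nil[OF w(2)] by simp
next
  case False
  \<comment> \<open>no codeword is empty, so decoding does not shorten words\<close>
  have "\<phi> b \<in> U" if "b \<in> set w" for b using code w(1) that by blast
  with False have "length w \<le> length (concat (map \<phi> w))"
    by (intro length_le_length_concat_map) fastforce
  then show ?thesis using gen_ext_tree_complete_bifix_code[OF dendric U w(2)] w(3) by simp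
qed

theorem mainTheorem19:
  fixes A :: "'a set" and X :: "(int \<Rightarrow> 'a) set" and n :: nat
    and U :: "'a list set" and B :: "'b set" and \<phi> :: "'b \<Rightarrow> 'a list"
    and Y :: "(int \<Rightarrow> 'b) set"
  assumes "shift_space A X"
    and "eventually_dendric X n"
    and "finite U" and "U \<subseteq> lang X" and "bifix_code U"
    and "two_sided_complete X U"
    and "complete_bifix_decoding X U B \<phi> Y"
  shows "eventually_dendric Y n"
  unfolding eventually_dendric_def
proof (intro ballI impI)
  fix w assume w: "w \<in> lang Y" "n \<le> length w"
  have code: "\<phi> ` B = U" "inj_on \<phi> B"
    and lang_Y: "lang Y = {v. set v \<subseteq> B \<and> concat (map \<phi> v) \<in> lang X}"
    using assms(7) by (simp_all add: complete_bifix_decoding_def bij_betw_def)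
  with w have "set w \<subseteq> B" "concat (map \<phi> w) \<in> lang X" by auto
  with w(2) have "gen_ext_tree (lang X) U U (concat (map \<phi> w))"
    using gen_ext_tree_decoding[OF assms(2,3,5,6) code(1)] by blast
  moreover have "ug_tree (ext_vertices (lang Y) w) (ext_adj (lang Y) w)
      \<longleftrightarrow> gen_ext_tree (lang X) (\<phi> ` B) (\<phi> ` B) (concat (map \<phi> w))"
    using \<open>set w \<subseteq> B\<close> by (intro ext_tree_iff_gen_ext_tree[OF code(2)]) (auto simp: lang_Y)
  ultimately show "ug_tree (ext_vertices (lang Y) w) (ext_adj (lang Y) w)"
    using code(1) by simp
qed

end
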